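(* Let $G$ be a strongly connected directed co-graph with co-tree $T$, let $\hat{w}$ be an inner node of $T$, and let $R_{\hat{w}}\subseteq V(G_{\hat{w}})$ be a resolving set for $V(G_{\hat{w}})$ in $G$ such that $G_{\hat{w}}$ has a 1-vertex $u_1$ and a 2-vertex $u_2$ w.r.t. $R_{\hat{w}}$. Then there is no vertex $v\in V(G_{\hat{w}})\setminus\{u_1,u_2\}$ such that $R_{\hat{w}}\cup\{v\}$ is a resolving set for $V(G_{\hat{w}})$ in $G$ and $G_{\hat{w}}$ has neither a 1-vertex nor a 2-vertex w.r.t. $R_{\hat{w}}\cup\{v\}$.
   Context: All graphs are finite and simple. For vertices $u,v$ of a directed graph $G$, $d_G(u,v)$ is the length of a shortest directed path from $u$ to $v$ (undefined if none exists); $G$ is strongly connected if directed paths exist in both directions between any two vertices. A vertex $w$ resolves two distinct vertices $u,v$ in $G$ if $w=u$, or $w=v$, or there are paths from $w$ to $u$ and from $w$ to $v$ with $d_G(w,u)\neq d_G(w,v)$. For $U\subseteq V(G)$, a set $R\subseteq U$ is a resolving set for $U$ in $G$ if every pair of distinct vertices of $U$ is resolved in $G$ by some vertex of $R$. Directed co-graphs and co-trees: a single vertex $u$ is a directed co-graph whose co-tree is a single leaf associated with $u$. If $G_1,G_2$ are directed co-graphs on disjoint vertex sets with co-trees $T_1,T_2$, then the disjoint union (edge set $E(G_1)\cup E(G_2)$), the join (additionally all edges $(u,v),(v,u)$ with $u\in V(G_1),v\in V(G_2)$) and the directed join (additionally all edges $(u,v)$ with $u\in V(G_1),v\in V(G_2)$),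 each on vertex set $V(G_1)\cup V(G_2)$, are directed co-graphs; the co-tree is obtained by adding a new root (labelled by the operation) whose two successors are the roots of $T_1$ and $T_2$. Non-leaf nodes are inner nodes. For a node $\hat{w}$ of $T$, $G_{\hat{w}}$ is the subgraph of $G$ induced by the vertices associated with the leaves of the subtree rooted at $\hat{w}$. For a directed graph $H$ and a nonempty $R\subseteq V(H)$, a vertex $u\in V(H)\setminus R$ is a 1-vertex w.r.t. $R$ if $(w,u)\in E(H)$ for all $w\in R$, and a 2-vertex w.r.t. $R$ if $(w,u)\notin E(H)$ for all $w\in R$. *)

theory Defs
  imports Main
begin

datatype 'a cotree =
    Leaf 'a
  | DUnion "'a cotree" "'a cotree"
  | Join "'a cotree" "'a cotree"
  | DJoin "'a cotree" "'a cotree"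

fun leaves :: "'a cotree \<Rightarrow> 'a set" where
  "leaves (Leaf v) = {v}"
| "leaves (DUnion a b) = leaves a \<union> leaves b"
| "leaves (Join a b) = leaves a \<union> leaves b"
| "leaves (DJoin a b) = leaves a \<union> leaves b"

fun cotree_wf :: "'a cotree \<Rightarrow> bool" where
  "cotree_wf (Leaf v) = True"
| "cotree_wf (DUnion a b) = (cotree_wf a \<and> cotree_wf b \<and> leaves a \<inter> leaves b = {})"
| "cotree_wf (Join a b) = (cotree_wf a \<and> cotree_wf b \<and> leaves a \<inter> leaves b = {})"
| "cotree_wf (DJoin a b) = (cotree_wf a \<and> cotree_wf b \<and> leaves a \<inter> leaves b = {})"

fun cg_edges :: "'a cotree \<Rightarrow> ('a \<times> 'a) set" where
  "cg_edges (Leaf v) = {}"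
| "cg_edges (DUnion a b) = cg_edges a \<union> cg_edges b"
| "cg_edges (Join a b) = cg_edges a \<union> cg_edges b \<union> (leaves a \<times> leaves b) \<union> (leaves b \<times> leaves a)"
| "cg_edges (DJoin a b) = cg_edges a \<union> cg_edges b \<union> (leaves a \<times> leaves b)"

text \<open>Nodes of a co-tree, represented by the subtrees rooted at them.\<close>
fun subtrees :: "'a cotree \<Rightarrow> 'a cotree set" where
  "subtrees (Leaf v) = {Leaf v}"
| "subtrees (DUnion a b) = insert (DUnion a b) (subtrees a \<union> subtrees b)"
| "subtrees (Join a b) = insert (Join a b) (subtrees a \<union> subtrees b)"
| "subtrees (DJoin a b) = insert (DJoin a b) (subtrees a \<union> subtrees b)"

fun is_inner :: "'a cotree \<Rightarrow> bool" where
  "is_inner (Leaf v) = False"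
| "is_inner _ = True"

definition cotree_of :: "'a set \<Rightarrow> ('a \<times> 'a) set \<Rightarrow> 'a cotree \<Rightarrow> bool" where
  "cotree_of V E T \<longleftrightarrow> cotree_wf T \<and> V = leaves T \<and> E = cg_edges T"

definition strongly_connected :: "'a set \<Rightarrow> ('a \<times> 'a) set \<Rightarrow> bool" where
  "strongly_connected V E \<longleftrightarrow> (\<forall>u\<in>V. \<forall>v\<in>V. (u, v) \<in> E\<^sup>*)"

text \<open>Length of a shortest directed path (meaningful only when one exists).\<close>
definition dist :: "('a \<times> 'a) set \<Rightarrow> 'a \<Rightarrow> 'a \<Rightarrow> nat" where
  "dist E u v = (LEAST n. (u, v) \<in> E ^^ n)"

definition resolves :: "('a \<times> 'a) set \<Rightarrow> 'a \<Rightarrow> 'a \<Rightarrow> 'a \<Rightarrow> bool" where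
  "resolves E w u v \<longleftrightarrow> w = u \<or> w = v \<or>
     ((w, u) \<in> E\<^sup>* \<and> (w, v) \<in> E\<^sup>* \<and> dist E w u \<noteq> dist E w v)"

definition resolving_set :: "('a \<times> 'a) set \<Rightarrow> 'a set \<Rightarrow> 'a set \<Rightarrow> bool" where
  "resolving_set E U R \<longleftrightarrow> R \<subseteq> U \<and>
     (\<forall>u\<in>U. \<forall>v\<in>U. u \<noteq> v \<longrightarrow> (\<exists>w\<in>R. resolves E w u v))"

definition induced_edges :: "('a \<times> 'a) set \<Rightarrow> 'a set \<Rightarrow> ('a \<times> 'a) set" where
  "induced_edges E W = E \<inter> (W \<times> W)"

definition one_vertex :: "'a set \<Rightarrow> ('a \<times> 'a) set \<Rightarrow> 'a set \<Rightarrow> 'a \<Rightarrow> bool" where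
  "one_vertex VH EH R u \<longleftrightarrow> R \<noteq> {} \<and> u \<in> VH - R \<and> (\<forall>w\<in>R. (w, u) \<in> EH)"

definition two_vertex :: "'a set \<Rightarrow> ('a \<times> 'a) set \<Rightarrow> 'a set \<Rightarrow> 'a \<Rightarrow> bool" where
  "two_vertex VH EH R u \<longleftrightarrow> R \<noteq> {} \<and> u \<in> VH - R \<and> (\<forall>w\<in>R. (w, u) \<notin> EH)"

end

theory Submission
  imports Defs
begin

(* In a directed co-graph the edges between the two sides of an operation are uniform, so by
   induction over the co-tree: if every vertex of R is an in-neighbour of u1 and none is an
   in-neighbour of u2, then a vertex v with an edge to u2 but none to u1 is an in-neighbour of all
   of R or of none of R.
   A vertex v as in the claim must have exactly these edges, since otherwise u1 would remain a
   1-vertex or u2 a 2-vertex w.r.t. R + v. A strongly connected co-graph has a join at its root,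
   hence diameter at most 2; so distances from r are determined by adjacency, and the resolving
   set R must contain an in-neighbour of exactly one of v, u1 and of exactly one of v, u2.
   That yields both an in-neighbour and a non-in-neighbour of v in R. *)

lemma leaves_nonempty: "leaves t \<noteq> {}"
  by (induction t) auto

lemma leaves_subtree: "s \<in> subtrees t \<Longrightarrow> leaves s \<subseteq> leaves t"
  by (induction t) auto

lemma cg_edges_subset: "cg_edges t \<subseteq> leaves t \<times> leaves t"
  by (induction t) auto

lemma cg_edges_child:
  assumes "cotree_wf t" and "t \<in> {DUnion a b, Join a b, DJoin a b}"
  shows "cg_edges t \<inter> leaves a \<times> leaves a = cg_edges a"
    and "cg_edges t \<inter> leaves b \<times> leaves b = cg_edges b"
  using assms cg_edges_subset[of a] cg_edges_subset[of b] by (auto simp: disjoint_iff) blast+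

lemma cg_edges_between_children:
  assumes "cotree_wf t" and "t \<in> {DUnion a b, Join a b, DJoin a b}"
  obtains c1 c2 where "\<forall>x\<in>leaves a. \<forall>y\<in>leaves b. (x, y) \<in> cg_edges t \<longleftrightarrow> c1"
    and "\<forall>x\<in>leaves b. \<forall>y\<in>leaves a. (x, y) \<in> cg_edges t \<longleftrightarrow> c2"
proof -
  have disjoint: "leaves a \<inter> leaves b = {}" using assms by auto
  then have no_cross: "(x, y) \<notin> cg_edges a \<union> cg_edges b"
    if "x \<in> leaves a \<and> y \<in> leaves b \<or> x \<in> leaves b \<and> y \<in> leaves a" for x y
    using that cg_edges_subset[of a] cg_edges_subset[of b] by blast
  from assms(2) show thesis
  proof (elim insertE emptyE)
    assume "t = DUnion a b"
    then show thesis using that[of False False] no_cross by auto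
  next
    assume "t = Join a b"
    then show thesis using that[of True True] by auto
  next
    assume "t = DJoin a b"
    then show thesis using that[of True False] no_cross disjoint by auto
  qed
qed

text \<open>The pattern that would let the in-neighbourhood of \<open>v\<close> meet \<open>R\<close> without containing it,
  with \<open>r, r' \<in> R\<close>; no co-graph contains it, distinct vertices or not.\<close>
definition obstruction :: "('a \<times> 'a) set \<Rightarrow> 'a \<Rightarrow> 'a \<Rightarrow> 'a \<Rightarrow> 'a \<Rightarrow> 'a \<Rightarrow> bool" where
  "obstruction E r r' u1 u2 v \<longleftrightarrow>
     (r, u1) \<in> E \<and> (r', u1) \<in> E \<and> (r, u2) \<notin> E \<and> (r', u2) \<notin> E \<and>
     (v, u2) \<in> E \<and> (v, u1) \<notin> E \<and> (r, v) \<in> E \<and> (r', v) \<notin> E"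

lemma obstruction_vertices:
  "E \<subseteq> S \<times> S \<Longrightarrow> obstruction E r r' u1 u2 v \<Longrightarrow> {r, r', u1, u2, v} \<subseteq> S"
  unfolding obstruction_def by blast

lemma obstruction_restrict:
  "{r, r', u1, u2, v} \<subseteq> S \<Longrightarrow> obstruction E r r' u1 u2 v \<Longrightarrow> obstruction (E \<inter> S \<times> S) r r' u1 u2 v"
  unfolding obstruction_def by simp

lemma obstruction_within_part:
  assumes "A \<inter> B = {}"
    and AB: "\<forall>x\<in>A. \<forall>y\<in>B. (x, y) \<in> E \<longleftrightarrow> c1"
    and BA: "\<forall>x\<in>B. \<forall>y\<in>A. (x, y) \<in> E \<longleftrightarrow> c2"
    and "{r, r', u1, u2, v} \<subseteq> A \<union> B" and "obstruction E r r' u1 u2 v"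
  shows "{r, r', u1, u2, v} \<subseteq> A \<or> {r, r', u1, u2, v} \<subseteq> B"
proof -
  have in_AB: "r \<in> A \<union> B" "r' \<in> A \<union> B" "u1 \<in> A \<union> B" "u2 \<in> A \<union> B" "v \<in> A \<union> B"
    using assms(4) by auto
  have cross: "(x, y) \<in> E \<longleftrightarrow> (if x \<in> A then c1 else c2)"
    if "x \<in> A \<union> B" "y \<in> A \<union> B" "x \<in> A \<longleftrightarrow> y \<notin> A" for x y
    using that assms(1) AB BA by auto
  note E = assms(5)[unfolded obstruction_def]
  \<comment> \<open>If \<open>u1\<close> and \<open>u2\<close> were on different sides, \<open>r\<close> and \<open>r'\<close> would both lie opposite
    to \<open>v\<close>, so the uniform cross edges could not tell them apart as in-neighbours of \<open>v\<close>.\<close>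
  have u_same_side: "u2 \<in> A \<longleftrightarrow> u1 \<in> A"
  proof (rule ccontr)
    assume "(u2 \<in> A) \<noteq> (u1 \<in> A)"
    then have "r \<in> A \<longleftrightarrow> v \<notin> A" "r' \<in> A \<longleftrightarrow> v \<notin> A"
      using E cross[OF in_AB(1) in_AB(3)] cross[OF in_AB(1) in_AB(4)]
        cross[OF in_AB(2) in_AB(3)] cross[OF in_AB(2) in_AB(4)]
        cross[OF in_AB(5) in_AB(3)] cross[OF in_AB(5) in_AB(4)]
      by auto
    then have "(r, v) \<in> E \<longleftrightarrow> (r', v) \<in> E"
      using cross[OF in_AB(1) in_AB(5)] cross[OF in_AB(2) in_AB(5)] by auto
    then show False using E by blast
  qed
  have "r \<in> A \<longleftrightarrow> u1 \<in> A" "r' \<in> A \<longleftrightarrow> u1 \<in> A" "v \<in> A \<longleftrightarrow> u1 \<in> A"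
    using E u_same_side cross[OF in_AB(1) in_AB(3)] cross[OF in_AB(1) in_AB(4)]
      cross[OF in_AB(2) in_AB(3)] cross[OF in_AB(2) in_AB(4)]
      cross[OF in_AB(5) in_AB(3)] cross[OF in_AB(5) in_AB(4)]
    by auto
  then show ?thesis using u_same_side in_AB assms(1) by blast
qed

lemma obstruction_in_child:
  assumes "cotree_wf t" and "t \<in> {DUnion a b, Join a b, DJoin a b}"
    and "obstruction (cg_edges t) r r' u1 u2 v"
  shows "obstruction (cg_edges a) r r' u1 u2 v \<or> obstruction (cg_edges b) r r' u1 u2 v"
proof -
  obtain c1 c2 where
    "\<forall>x\<in>leaves a. \<forall>y\<in>leaves b. (x, y) \<in> cg_edges t \<longleftrightarrow> c1"
    "\<forall>x\<in>leaves b. \<forall>y\<in>leaves a. (x, y) \<in> cg_edges t \<longleftrightarrow> c2"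
    using cg_edges_between_children[OF assms(1,2)] .
  moreover have "leaves a \<inter> leaves b = {}" and "leaves t = leaves a \<union> leaves b"
    using assms(1,2) by auto
  moreover have "{r, r', u1, u2, v} \<subseteq> leaves t"
    by (rule obstruction_vertices[OF cg_edges_subset assms(3)])
  ultimately have "{r, r', u1, u2, v} \<subseteq> leaves a \<or> {r, r', u1, u2, v} \<subseteq> leaves b"
    using obstruction_within_part assms(3) by metis
  then show ?thesis
    using obstruction_restrict[OF _ assms(3)] cg_edges_child[OF assms(1,2)] by metis
qed

lemma cotree_no_obstruction: "cotree_wf t \<Longrightarrow> \<not> obstruction (cg_edges t) r r' u1 u2 v"
proof (induction t)
  case (Leaf x)
  then show ?case by (simp add: obstruction_def)
next
  case (DUnion a b)
  then show ?case using obstruction_in_child[of "DUnion a b" a b r r' u1 u2 v] by auto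
next
  case (Join a b)
  then show ?case using obstruction_in_child[of "Join a b" a b r r' u1 u2 v] by auto
next
  case (DJoin a b)
  then show ?case using obstruction_in_child[of "DJoin a b" a b r r' u1 u2 v] by auto
qed

lemma not_strongly_connected_if_closed:
  assumes "E `` A \<subseteq> A" and "x \<in> V \<inter> A" and "y \<in> V - A"
  shows "\<not> strongly_connected V E"
proof
  assume "strongly_connected V E"
  then have "y \<in> E\<^sup>* `` A"
    using assms(2,3) unfolding strongly_connected_def by blast
  then show False using Image_closed_trancl[OF assms(1)] assms(3) by blast
qed

lemma strongly_connected_cotree_within_two_steps:
  assumes "cotree_wf t" and "strongly_connected (leaves t) (cg_edges t)"
    and "x \<in> leaves t" and "y \<in> leaves t" and "x \<noteq> y"
  shows "(x, y) \<in> cg_edges t \<union> cg_edges t O cg_edges t"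
proof (cases t)
  case (Leaf z)
  then show ?thesis using assms(3-5) by simp
next
  case (DUnion a b)
  obtain p q where "p \<in> leaves a" "q \<in> leaves b"
    using leaves_nonempty by (meson ex_in_conv)
  moreover have "cg_edges t `` leaves a \<subseteq> leaves a"
    using DUnion cg_edges_subset[of a] cg_edges_subset[of b] assms(1) by auto
  ultimately show ?thesis
    using not_strongly_connected_if_closed[of "cg_edges t" "leaves a" p "leaves t" q] assms(1,2) DUnion
    by auto
next
  case (DJoin a b)
  obtain p q where "p \<in> leaves a" "q \<in> leaves b"
    using leaves_nonempty by (meson ex_in_conv)
  moreover have "cg_edges t `` leaves b \<subseteq> leaves b"
    using DJoin cg_edges_subset[of a] cg_edges_subset[of b] assms(1) by auto
  ultimately show ?thesis
    using not_strongly_connected_if_closed[of "cg_edges t" "leaves b" q "leaves t" p] assms(1,2) DJoin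
    by auto
next
  case (Join a b)
  obtain p q where "p \<in> leaves a" "q \<in> leaves b"
    using leaves_nonempty by (meson ex_in_conv)
  then show ?thesis using Join assms(3,4) by auto
qed

lemma dist_within_two_steps:
  assumes "(x, y) \<in> E \<union> E O E" and "x \<noteq> y"
  shows "dist E x y = (if (x, y) \<in> E then 1 else 2)"
  unfolding dist_def
proof (rule Least_equality)
  show "(x, y) \<in> E ^^ (if (x, y) \<in> E then 1 else 2)"
    using assms(1) by (auto simp: numeral_2_eq_2)
next
  fix n assume "(x, y) \<in> E ^^ n"
  then show "(if (x, y) \<in> E then 1 else 2) \<le> n"
    using assms(2) by (cases n; cases "n - 1") auto
qed

lemma resolving_set_distinguishes_by_adjacency:
  assumes diameter: "\<forall>x\<in>V. \<forall>y\<in>V. x \<noteq> y \<longrightarrow> (x, y) \<in> E \<union> E O E"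
    and "resolving_set E U R" and "U \<subseteq> V"
    and "x \<in> U - R" and "y \<in> U - R" and "x \<noteq> y"
  obtains r where "r \<in> R" and "(r, x) \<in> E \<longleftrightarrow> (r, y) \<notin> E"
proof -
  obtain r where r: "r \<in> R" "resolves E r x y"
    using assms(2,4-6) unfolding resolving_set_def by blast
  have "r \<noteq> x" "r \<noteq> y" "r \<in> V"
    using r(1) assms(2-5) unfolding resolving_set_def by auto
  then have "dist E r x \<noteq> dist E r y"
    using r(2) unfolding resolves_def by blast
  moreover have "(r, x) \<in> E \<union> E O E" "(r, y) \<in> E \<union> E O E"
    using diameter \<open>r \<in> V\<close> \<open>r \<noteq> x\<close> \<open>r \<noteq> y\<close> assms(3-5) by auto
  ultimately have "(r, x) \<in> E \<longleftrightarrow> (r, y) \<notin> E"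
    using dist_within_two_steps \<open>r \<noteq> x\<close> \<open>r \<noteq> y\<close> by metis
  then show thesis using that r(1) by blast
qed

theorem lemma3:
  fixes V :: "'a set" and E :: "('a \<times> 'a) set" and T w :: "'a cotree"
    and R :: "'a set" and u1 u2 :: 'a
  assumes "cotree_of V E T"
    and "strongly_connected V E"
    and "w \<in> subtrees T" and "is_inner w"
    and "resolving_set E (leaves w) R"
    and "one_vertex (leaves w) (induced_edges E (leaves w)) R u1"
    and "two_vertex (leaves w) (induced_edges E (leaves w)) R u2"
  shows "\<not> (\<exists>v \<in> leaves w - {u1, u2}.
            resolving_set E (leaves w) (insert v R) \<and>
            \<not> (\<exists>x. one_vertex (leaves w) (induced_edges E (leaves w)) (insert v R) x) \<and>
            \<not> (\<exists>x. two_vertex (leaves w) (induced_edges E (leaves w)) (insert v R) x))"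
proof (intro notI, elim bexE conjE)
  fix v
  assume v: "v \<in> leaves w - {u1, u2}"
    and "\<nexists>x. one_vertex (leaves w) (induced_edges E (leaves w)) (insert v R) x"
    and "\<nexists>x. two_vertex (leaves w) (induced_edges E (leaves w)) (insert v R) x"
  then have v_u: "(v, u1) \<notin> E" "(v, u2) \<in> E"
    using assms(6,7) unfolding one_vertex_def two_vertex_def induced_edges_def by auto
  have u1: "u1 \<in> leaves w - R" "\<forall>r\<in>R. (r, u1) \<in> E"
    and u2: "u2 \<in> leaves w - R" "\<forall>r\<in>R. (r, u2) \<notin> E"
    using assms(6,7) unfolding one_vertex_def two_vertex_def induced_edges_def by auto
  have "v \<in> leaves w - R" using v v_u u1(2) by blast
  have wf: "cotree_wf T" and E: "E = cg_edges T" and V: "V = leaves T"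
    using assms(1) unfolding cotree_of_def by auto
  have diameter: "\<forall>x\<in>V. \<forall>y\<in>V. x \<noteq> y \<longrightarrow> (x, y) \<in> E \<union> E O E"
    using strongly_connected_cotree_within_two_steps[OF wf] assms(2) unfolding E V by blast
  have "leaves w \<subseteq> V" using leaves_subtree[OF assms(3)] V by simp
  obtain r where "r \<in> R" "(r, v) \<notin> E"
    using resolving_set_distinguishes_by_adjacency[OF diameter assms(5) \<open>leaves w \<subseteq> V\<close>
        \<open>v \<in> leaves w - R\<close> u1(1)] v u1(2) by blast
  obtain r' where "r' \<in> R" "(r', v) \<in> E"
    using resolving_set_distinguishes_by_adjacency[OF diameter assms(5) \<open>leaves w \<subseteq> V\<close>
        \<open>v \<in> leaves w - R\<close> u2(1)] v u2(2) by blast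
  have "obstruction E r' r u1 u2 v"
    unfolding obstruction_def using v_u u1 u2 \<open>r \<in> R\<close> \<open>(r, v) \<notin> E\<close> \<open>r' \<in> R\<close> \<open>(r', v) \<in> E\<close> by blast
  then show False using cotree_no_obstruction[OF wf] E by simp
qed

end
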